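(* Let $m\ge 0$ be an integer. Any two singly even self-dual $[24m+4,12m+2,4m+2]$ codes with minimal shadow have the same weight enumerator; that is, the weight enumerator of a singly even self-dual $[24m+4,12m+2,4m+2]$ code with minimal shadow is uniquely determined by $m$.
   Context: A binary code of length $n$ is a subspace of $\mathbb{F}_2^n$; $C^\perp$ is its dual with respect to the standard inner product, and $C$ is self-dual if $C=C^\perp$. A self-dual code is singly even if it contains a codeword of weight $\equiv 2 \pmod 4$. For a singly even self-dual code $C$, let $C_0$ be the subcode of codewords of weight $\equiv 0\pmod 4$; the shadow of $C$ is $S=C_0^\perp\setminus C$. For $n\equiv 4\pmod 8$, $C$ is said to have minimal shadow if the minimum weight of $S$ equals $2$. An $[n,k,d]$ code is a code of length $n$, dimension $k$ and minimum weight $d$. The weight enumerator of $C$ is $\sum_{x\in C} y^{\mathrm{wt}(x)}$. *)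

theory Defs
  imports Main
begin

text \<open>Binary words of length n are modelled as subsets of {..<n} (their supports).
  Addition in F_2^n is symmetric difference, weight is cardinality, and the standard
  inner product of x and y is the parity of card (x \<inter> y).\<close>

definition words :: "nat \<Rightarrow> nat set set" where
  "words n = Pow {..<n}"

definition vadd :: "nat set \<Rightarrow> nat set \<Rightarrow> nat set" where
  "vadd x y = (x - y) \<union> (y - x)"

definition wt :: "nat set \<Rightarrow> nat" where
  "wt x = card x"

definition orth :: "nat set \<Rightarrow> nat set \<Rightarrow> bool" where
  "orth x y \<longleftrightarrow> even (card (x \<inter> y))"

definition is_code :: "nat \<Rightarrow> nat set set \<Rightarrow> bool" where
  "is_code n C \<longleftrightarrow> C \<subseteq> words n \<and> {} \<in> C \<and> (\<forall>x\<in>C. \<forall>y\<in>C. vadd x y \<in> C)"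

definition dual :: "nat \<Rightarrow> nat set set \<Rightarrow> nat set set" where
  "dual n C = {y \<in> words n. \<forall>x\<in>C. orth x y}"

definition self_dual :: "nat \<Rightarrow> nat set set \<Rightarrow> bool" where
  "self_dual n C \<longleftrightarrow> is_code n C \<and> C = dual n C"

definition min_wt :: "nat set set \<Rightarrow> nat" where
  "min_wt C = Min (wt ` (C - {{}}))"

definition is_nkd_code :: "nat \<Rightarrow> nat \<Rightarrow> nat \<Rightarrow> nat set set \<Rightarrow> bool" where
  "is_nkd_code n k d C \<longleftrightarrow> is_code n C \<and> card C = 2 ^ k \<and> min_wt C = d"

definition singly_even :: "nat \<Rightarrow> nat set set \<Rightarrow> bool" where
  "singly_even n C \<longleftrightarrow> self_dual n C \<and> (\<exists>x\<in>C. wt x mod 4 = 2)"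

definition doubly_even_subcode :: "nat set set \<Rightarrow> nat set set" where
  "doubly_even_subcode C = {x \<in> C. wt x mod 4 = 0}"

definition shadow :: "nat \<Rightarrow> nat set set \<Rightarrow> nat set set" where
  "shadow n C = dual n (doubly_even_subcode C) - C"

text \<open>Minimal shadow (for n \<equiv> 4 mod 8): minimum weight of the shadow equals 2.\<close>
definition minimal_shadow :: "nat \<Rightarrow> nat set set \<Rightarrow> bool" where
  "minimal_shadow n C \<longleftrightarrow> Min (wt ` shadow n C) = 2"

text \<open>Weight enumerator, represented by its coefficient sequence:
  coefficient of y^i is the number of codewords of weight i.\<close>
definition weight_enum :: "nat set set \<Rightarrow> nat \<Rightarrow> nat" where
  "weight_enum C i = card {x \<in> C. wt x = i}"

end

theory Submission
  imports Defs "HOL-Computational_Algebra.Polynomial"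
begin

(* The MacWilliams identity expresses the weight enumerator of a self-dual code C as its own
   transform under y \<mapsto> (1-y)/(1+y); the shadow identity says that the same transform, applied
   after twisting the coefficient of y^i by (-1)^(i/2), gives |C| times the weight enumerator of
   the shadow S.  Extremality fixes the weight distribution of C below 4m+2 and, by
   complementation, above 20m+2.  Two shadow vectors add up to a codeword, so a shadow vector of
   weight 2 leaves no other shadow vector of weight below 4m; again by complementation the shadow
   distribution is also fixed above 20m+4.  Hence the difference \<Delta>(z) of two admissible weight
   enumerators vanishes to order K = 4m+2 at 0, and by MacWilliams invariance also at 1 and -1:
   \<Delta> = z^K (z^2-1)^K R.  The Cayley substitution z = i(1-t)/(1+t) turns the shadow relation into
   the statement that (1-t^4)^K X(t), with X the transform of R, is a polynomial of degree at
   most 20m+4 vanishing to order 4m at 0.  Since 4K = 16m+8, this forces X = 0 and hence \<Delta> = 0. *)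

lemma finite_if_mem_words: "v \<in> words n \<Longrightarrow> finite v"
  unfolding words_def by (auto intro: finite_subset)

lemma wt_le_if_mem_words: "v \<in> words n \<Longrightarrow> wt v \<le> n"
  unfolding words_def wt_def by (metis PowD card_lessThan card_mono finite_lessThan)

lemma vadd_vadd_cancel: "vadd (vadd x y) y = x"
  unfolding vadd_def by auto

lemma vadd_eq_empty_iff: "vadd x y = {} \<longleftrightarrow> x = y"
  unfolding vadd_def by auto

lemma vadd_mem_words: "x \<in> words n \<Longrightarrow> y \<in> words n \<Longrightarrow> vadd x y \<in> words n"
  unfolding words_def vadd_def by auto

lemma wt_vadd_all_ones:
  assumes "v \<in> words n"
  shows "wt (vadd v {..<n}) = n - wt v"
proof -
  have "vadd v {..<n} = {..<n} - v" using assms unfolding vadd_def words_def by auto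
  then show ?thesis
    using assms finite_if_mem_words[OF assms] unfolding wt_def words_def by (simp add: card_Diff_subset)
qed

lemma card_vadd:
  assumes "finite x" "finite y"
  shows "card (vadd x y) + 2 * card (x \<inter> y) = card x + card y"
proof -
  have "card (vadd x y) = card (x - y) + card (y - x)"
    unfolding vadd_def using assms by (intro card_Un_disjoint) auto
  moreover have "card x = card (x \<inter> y) + card (x - y)" using assms(1) by (rule card_Int_Diff)
  moreover have "card y = card (x \<inter> y) + card (y - x)"
    using card_Int_Diff[OF assms(2), of x] by (simp add: Int_commute)
  ultimately show ?thesis by simp
qed

lemma wt_vadd_mod_4:
  assumes "finite x" "finite y" "orth x y"
  shows "wt (vadd x y) mod 4 = (wt x + wt y) mod 4"
  using card_vadd[OF assms(1,2)] assms(3) unfolding wt_def orth_def by presburger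

lemma orth_commute: "orth x y \<longleftrightarrow> orth y x"
  unfolding orth_def by (simp add: Int_commute)

lemma orth_vadd_iff:
  assumes "finite z"
  shows "orth z (vadd x y) \<longleftrightarrow> (orth z x \<longleftrightarrow> orth z y)"
proof -
  have "z \<inter> vadd x y = vadd (z \<inter> x) (z \<inter> y)" unfolding vadd_def by auto
  moreover have "card (vadd (z \<inter> x) (z \<inter> y)) + 2 * card (z \<inter> x \<inter> (z \<inter> y)) = card (z \<inter> x) + card (z \<inter> y)"
    using assms by (intro card_vadd) auto
  ultimately show ?thesis unfolding orth_def by presburger
qed

lemma weight_enum_eq_0_if_gt:
  assumes "A \<subseteq> words n" "n < i"
  shows "weight_enum A i = 0"
proof -
  have "{x \<in> A. wt x = i} = {}" using assms wt_le_if_mem_words by force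
  then show ?thesis unfolding weight_enum_def by (metis card.empty)
qed

lemma weight_enum_complement:
  assumes "A \<subseteq> words n" "\<And>x. x \<in> A \<Longrightarrow> vadd x {..<n} \<in> A" "i \<le> n"
  shows "weight_enum A (n - i) = weight_enum A i"
proof -
  have "bij_betw (\<lambda>x. vadd x {..<n}) {x \<in> A. wt x = i} {x \<in> A. wt x = n - i}"
  proof (rule bij_betw_byWitness[where f' = "\<lambda>x. vadd x {..<n}"])
    show "(\<lambda>x. vadd x {..<n}) ` {x \<in> A. wt x = i} \<subseteq> {x \<in> A. wt x = n - i}"
      using assms wt_vadd_all_ones by auto
    show "(\<lambda>x. vadd x {..<n}) ` {x \<in> A. wt x = n - i} \<subseteq> {x \<in> A. wt x = i}"
      using assms wt_vadd_all_ones wt_le_if_mem_words by fastforce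
  qed (simp_all add: vadd_vadd_cancel)
  then show ?thesis unfolding weight_enum_def by (simp add: bij_betw_same_card)
qed

lemma sum_by_weight_enum:
  fixes f :: "nat \<Rightarrow> 'a::comm_semiring_1"
  assumes "finite A" "A \<subseteq> words n"
  shows "(\<Sum>a\<in>A. f (wt a)) = (\<Sum>i\<le>n. of_nat (weight_enum A i) * f i)"
proof -
  have "(\<Sum>a\<in>A. f (wt a)) = (\<Sum>i\<le>n. \<Sum>a\<in>{x\<in>A. wt x = i}. f (wt a))"
    by (rule sum.group[symmetric]) (use assms wt_le_if_mem_words in auto)
  also have "\<dots> = (\<Sum>i\<le>n. of_nat (weight_enum A i) * f i)"
    unfolding weight_enum_def by (rule sum.cong) simp_all
  finally show ?thesis .
qed

section \<open>The MacWilliams identity\<close>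

lemma sum_words_character:
  fixes y :: "'a::comm_ring_1"
  assumes "u \<in> words n"
  shows "(\<Sum>v\<in>words n. (-1)^card (u \<inter> v) * y^wt v) = (1-y)^wt u * (1+y)^(n - wt u)"
proof -
  have u: "u \<subseteq> {..<n}" "finite u" using assms finite_if_mem_words by (auto simp: words_def)
  define f where "f x = (if x \<in> u then -y else y)" for x
  have prod_f: "(\<Prod>x\<in>v. f x) = (-1)^card (u \<inter> v) * y^card v" if "v \<subseteq> {..<n}" for v
  proof -
    have fv: "finite v" using that finite_subset by blast
    have "(\<Prod>x\<in>v. f x) = (-y)^card (v \<inter> u) * y^card (v - u)"
      unfolding f_def prod.If_cases[OF fv] by (simp add: Diff_eq Int_def)
    also have "\<dots> = (-1)^card (u \<inter> v) * y^(card (v \<inter> u) + card (v - u))"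
    proof -
      have "(-y)^card (v \<inter> u) = (-1)^card (v \<inter> u) * y^card (v \<inter> u)" by (rule power_minus)
      then show ?thesis by (simp add: power_add Int_commute mult.assoc)
    qed
    also have "card (v \<inter> u) + card (v - u) = card v" using card_Int_Diff[OF fv, of u] by simp
    finally show ?thesis .
  qed
  have "(\<Sum>v\<in>words n. (-1)^card (u \<inter> v) * y^wt v) = (\<Prod>x\<in>{..<n}. f x + 1)"
    unfolding prod_add[OF finite_lessThan] words_def wt_def by (rule sum.cong) (auto simp: prod_f)
  also have "\<dots> = (\<Prod>x\<in>{..<n}. if x \<in> u then 1 - y else 1 + y)"
    by (rule prod.cong) (auto simp: f_def)
  also have "\<dots> = (1-y)^card u * (1+y)^card ({..<n} - u)"
  proof -
    have "{..<n} \<inter> {x. x \<in> u} = u" "{..<n} \<inter> - {x. x \<in> u} = {..<n} - u" using u(1) by auto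
    then show ?thesis by (simp only: prod.If_cases[OF finite_lessThan] prod_constant)
  qed
  also have "card ({..<n} - u) = n - card u" using u by (simp add: card_Diff_subset)
  finally show ?thesis by (simp add: wt_def)
qed

lemma code_finite: "is_code n E \<Longrightarrow> finite E"
  unfolding is_code_def words_def by (auto intro: finite_subset)

lemma sum_code_character:
  assumes E: "is_code n E" and v: "v \<in> words n"
  shows "(\<Sum>u\<in>E. (-1::int)^card (u \<inter> v)) = (if v \<in> dual n E then int (card E) else 0)"
proof (cases "v \<in> dual n E")
  case True
  then have "(\<Sum>u\<in>E. (-1::int)^card (u \<inter> v)) = (\<Sum>u\<in>E. 1)"
    by (intro sum.cong) (auto simp: dual_def orth_def)
  then show ?thesis using True by simp
next
  case False
  then obtain u0 where u0: "u0 \<in> E" "\<not> orth u0 v" using v by (auto simp: dual_def)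
  have sign_flip: "(-1::int)^card (vadd u u0 \<inter> v) = - ((-1)^card (u \<inter> v))" for u
  proof -
    have "orth v (vadd u u0) \<longleftrightarrow> (orth v u \<longleftrightarrow> orth v u0)"
      using finite_if_mem_words[OF v] by (rule orth_vadd_iff)
    then have "even (card (vadd u u0 \<inter> v)) \<longleftrightarrow> odd (card (u \<inter> v))"
      using u0(2) by (auto simp: orth_def Int_commute)
    then show ?thesis by (auto simp: minus_one_power_iff)
  qed
  \<comment> \<open>translation by a codeword not orthogonal to v flips every sign\<close>
  have "(\<Sum>u\<in>E. (-1::int)^card (u \<inter> v)) = (\<Sum>u\<in>E. (-1::int)^card (vadd u u0 \<inter> v))"
    by (rule sum.reindex_bij_witness[of _ "\<lambda>u. vadd u u0" "\<lambda>u. vadd u u0"])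
      (use E u0 in \<open>auto simp: is_code_def vadd_vadd_cancel\<close>)
  also have "\<dots> = - (\<Sum>u\<in>E. (-1::int)^card (u \<inter> v))" by (simp add: sign_flip sum_negf)
  finally show ?thesis using False by simp
qed

theorem macwilliams_identity:
  fixes y :: "'a::comm_ring_1"
  assumes E: "is_code n E"
  shows "(\<Sum>u\<in>E. (1-y)^wt u * (1+y)^(n - wt u)) = of_nat (card E) * (\<Sum>v\<in>dual n E. y^wt v)"
proof -
  have EW: "E \<subseteq> words n" using E by (simp add: is_code_def)
  have "(\<Sum>u\<in>E. (1-y)^wt u * (1+y)^(n - wt u)) = (\<Sum>u\<in>E. \<Sum>v\<in>words n. (-1)^card (u \<inter> v) * y^wt v)"
    using EW by (intro sum.cong) (auto simp: sum_words_character)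
  also have "\<dots> = (\<Sum>v\<in>words n. of_int (\<Sum>u\<in>E. (-1::int)^card (u \<inter> v)) * y^wt v)"
    by (subst sum.swap) (simp add: sum_distrib_right)
  also have "\<dots> = (\<Sum>v\<in>words n. if v \<in> dual n E then of_nat (card E) * y^wt v else 0)"
    by (rule sum.cong) (simp_all add: sum_code_character[OF E])
  also have "\<dots> = (\<Sum>v\<in>{v \<in> words n. v \<in> dual n E}. of_nat (card E) * y^wt v)"
    by (rule sum.inter_filter[symmetric]) (simp add: words_def)
  also have "{v \<in> words n. v \<in> dual n E} = dual n E" by (auto simp: dual_def)
  finally show ?thesis by (simp add: sum_distrib_left)
qed

locale self_dual_code =
  fixes n :: nat and C :: "nat set set"
  assumes self_dual: "self_dual n C"
begin

lemma code: "is_code n C"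
  using self_dual by (simp add: self_dual_def)

lemma dual_eq: "dual n C = C"
  using self_dual by (simp add: self_dual_def)

lemma finite_code: "finite C"
  using code by (rule code_finite)

lemma code_subset_words: "C \<subseteq> words n"
  using code by (simp add: is_code_def)

lemma finite_if_mem: "x \<in> C \<Longrightarrow> finite x"
  using code_subset_words finite_if_mem_words by blast

lemma empty_mem: "{} \<in> C"
  using code by (simp add: is_code_def)

lemma vadd_mem: "x \<in> C \<Longrightarrow> y \<in> C \<Longrightarrow> vadd x y \<in> C"
  using code by (simp add: is_code_def)

lemma orth_if_mem: "x \<in> C \<Longrightarrow> y \<in> C \<Longrightarrow> orth x y"
  using dual_eq unfolding dual_def by blast

lemma even_wt: "x \<in> C \<Longrightarrow> even (wt x)"
  using orth_if_mem[of x x] by (simp add: orth_def wt_def)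

lemma all_ones_mem: "{..<n} \<in> C"
proof -
  have "{..<n} \<in> dual n C"
    using code_subset_words even_wt by (auto simp: dual_def words_def orth_def wt_def Int_absorb2)
  then show ?thesis by (simp add: dual_eq)
qed

lemma min_wt_le: "x \<in> C \<Longrightarrow> x \<noteq> {} \<Longrightarrow> min_wt C \<le> wt x"
  unfolding min_wt_def using finite_code by (intro Min_le) auto

lemma weight_enum_0: "weight_enum C 0 = 1"
proof -
  have "{x \<in> C. wt x = 0} = {{}}"
    using empty_mem finite_if_mem by (auto simp: wt_def)
  then show ?thesis by (simp add: weight_enum_def)
qed

lemma weight_enum_eq_0_if_odd:
  assumes "odd i"
  shows "weight_enum C i = 0"
proof -
  have "{x \<in> C. wt x = i} = {}" using assms even_wt by blast
  then show ?thesis unfolding weight_enum_def by (metis card.empty)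
qed

lemma weight_enum_eq_0_below_min_wt:
  assumes "0 < i" "i < min_wt C"
  shows "weight_enum C i = 0"
proof -
  have "{x \<in> C. wt x = i} = {}" using assms min_wt_le by (force simp: wt_def)
  then show ?thesis unfolding weight_enum_def by (metis card.empty)
qed

lemma weight_enum_symmetric: "i \<le> n \<Longrightarrow> weight_enum C (n - i) = weight_enum C i"
  using code_subset_words vadd_mem all_ones_mem by (intro weight_enum_complement) auto

lemma weight_enum_macwilliams:
  fixes y :: "'a::comm_ring_1"
  shows "(\<Sum>i\<le>n. of_nat (weight_enum C i) * ((1-y)^i * (1+y)^(n-i))) =
    of_nat (card C) * (\<Sum>i\<le>n. of_nat (weight_enum C i) * y^i)"
proof -
  have "(\<Sum>i\<le>n. of_nat (weight_enum C i) * ((1-y)^i * (1+y)^(n-i))) =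
      (\<Sum>u\<in>C. (1-y)^wt u * (1+y)^(n - wt u))"
    by (rule sum_by_weight_enum[OF finite_code code_subset_words, symmetric])
  also have "\<dots> = of_nat (card C) * (\<Sum>v\<in>C. y^wt v)"
    using macwilliams_identity[OF code, of y] by (simp only: dual_eq)
  also have "\<dots> = of_nat (card C) * (\<Sum>i\<le>n. of_nat (weight_enum C i) * y^i)"
    by (simp only: sum_by_weight_enum[OF finite_code code_subset_words])
  finally show ?thesis .
qed

end

section \<open>The shadow of a singly even code\<close>

locale singly_even_code =
  fixes n :: nat and C :: "nat set set"
  assumes singly_even: "singly_even n C"
begin

sublocale self_dual_code
  using singly_even by unfold_locales (simp add: singly_even_def)

abbreviation "C0 \<equiv> doubly_even_subcode C"
abbreviation "S \<equiv> shadow n C"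

lemma doubly_even_subcode_subset: "C0 \<subseteq> C"
  by (auto simp: doubly_even_subcode_def)

lemma wt_vadd_mem_mod_4: "x \<in> C \<Longrightarrow> y \<in> C \<Longrightarrow> wt (vadd x y) mod 4 = (wt x + wt y) mod 4"
  using finite_if_mem orth_if_mem by (intro wt_vadd_mod_4)

lemma mem_diff_doubly_even_subcode_iff: "x \<in> C - C0 \<longleftrightarrow> x \<in> C \<and> wt x mod 4 = 2"
proof -
  have "even w \<Longrightarrow> w mod 4 \<noteq> 0 \<longleftrightarrow> w mod 4 = 2" for w :: nat by presburger
  then show ?thesis using even_wt by (auto simp: doubly_even_subcode_def)
qed

lemma vadd_mem_doubly_even_subcode_iff:
  assumes x: "x \<in> C" and y: "y \<in> C - C0"
  shows "vadd x y \<in> C0 \<longleftrightarrow> x \<in> C - C0"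
proof -
  have "wt (vadd x y) mod 4 = (wt x + wt y) mod 4" "wt y mod 4 = 2" "even (wt x)"
    using x y wt_vadd_mem_mod_4 mem_diff_doubly_even_subcode_iff even_wt by auto
  then have "wt (vadd x y) mod 4 = 0 \<longleftrightarrow> wt x mod 4 = 2" by presburger
  moreover have "vadd x y \<in> C0 \<longleftrightarrow> wt (vadd x y) mod 4 = 0"
    using x y vadd_mem by (simp add: doubly_even_subcode_def)
  ultimately show ?thesis unfolding mem_diff_doubly_even_subcode_iff using x by simp
qed

lemma doubly_even_subcode_is_code: "is_code n C0"
  using code_subset_words empty_mem vadd_mem wt_vadd_mem_mod_4
  by (auto simp: is_code_def doubly_even_subcode_def wt_def)

lemma card_eq_twice_doubly_even_subcode: "card C = 2 * card C0"
proof -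
  obtain x0 where x0: "x0 \<in> C - C0"
    using singly_even mem_diff_doubly_even_subcode_iff unfolding singly_even_def by blast
  have "bij_betw (\<lambda>x. vadd x x0) C0 (C - C0)"
  proof (rule bij_betw_byWitness[where f' = "\<lambda>x. vadd x x0"])
    show "(\<lambda>x. vadd x x0) ` C0 \<subseteq> C - C0"
      using x0 vadd_mem vadd_mem_doubly_even_subcode_iff doubly_even_subcode_subset by blast
    show "(\<lambda>x. vadd x x0) ` (C - C0) \<subseteq> C0"
      using x0 vadd_mem_doubly_even_subcode_iff by blast
  qed (simp_all add: vadd_vadd_cancel)
  then have "card (C - C0) = card C0" by (simp add: bij_betw_same_card)
  moreover have "card C = card C0 + card (C - C0)"
    using finite_code doubly_even_subcode_subset by (metis card_Diff_subset card_mono le_add_diff_inverse finite_subset)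
  ultimately show ?thesis by simp
qed

lemma shadow_subset_words: "S \<subseteq> words n"
  by (auto simp: shadow_def dual_def)

lemma finite_shadow: "finite S"
  using shadow_subset_words finite_subset by (auto simp: words_def)

lemma shadow_disjoint: "C \<inter> S = {}"
  by (auto simp: shadow_def)

lemma dual_doubly_even_subcode: "dual n C0 = C \<union> S"
  using code_subset_words orth_if_mem doubly_even_subcode_subset
  by (auto simp: shadow_def dual_def)

lemma orth_shadow_if_doubly_even: "s \<in> S \<Longrightarrow> x \<in> C0 \<Longrightarrow> orth x s"
  by (auto simp: shadow_def dual_def)

lemma not_orth_shadow_if_singly_even:
  assumes s: "s \<in> S" and x: "x \<in> C - C0"
  shows "\<not> orth x s"
proof
  assume "orth x s"
  have "s \<notin> dual n C" using s by (simp add: shadow_def dual_eq)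
  then obtain x1 where x1: "x1 \<in> C" "\<not> orth x1 s"
    using s shadow_subset_words by (auto simp: dual_def)
  then have "x1 \<in> C - C0" using orth_shadow_if_doubly_even[OF s] by blast
  then have "vadd x x1 \<in> C0" using x vadd_mem_doubly_even_subcode_iff by blast
  then have "orth s (vadd x x1)" using orth_shadow_if_doubly_even[OF s] orth_commute by blast
  then show False
    using \<open>orth x s\<close> x1(2) orth_vadd_iff[of s x x1] s shadow_subset_words finite_if_mem_words
    by (auto simp: orth_commute)
qed

lemma vadd_shadow_mem:
  assumes s: "s \<in> S" and s': "s' \<in> S"
  shows "vadd s s' \<in> C"
proof -
  have "orth x (vadd s s')" if x: "x \<in> C" for x
  proof (cases "x \<in> C0")
    case True
    then show ?thesis
      using s s' orth_shadow_if_doubly_even orth_vadd_iff[OF finite_if_mem[OF x]] by blast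
  next
    case False
    then show ?thesis
      using x s s' not_orth_shadow_if_singly_even orth_vadd_iff[OF finite_if_mem[OF x]] by blast
  qed
  moreover have "vadd s s' \<in> words n"
    using s s' shadow_subset_words vadd_mem_words by blast
  ultimately have "vadd s s' \<in> dual n C" by (simp add: dual_def)
  then show ?thesis by (simp add: dual_eq)
qed

lemma vadd_all_ones_shadow_mem:
  assumes s: "s \<in> S"
  shows "vadd s {..<n} \<in> S"
proof -
  have "orth x (vadd s {..<n})" if x: "x \<in> C0" for x
    using x s orth_shadow_if_doubly_even orth_if_mem[OF _ all_ones_mem] doubly_even_subcode_subset
      orth_vadd_iff[OF finite_if_mem] by blast
  moreover have "vadd s {..<n} \<in> words n"
    using s shadow_subset_words all_ones_mem code_subset_words vadd_mem_words by blast
  ultimately have "vadd s {..<n} \<in> dual n C0" by (simp add: dual_def)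
  moreover have "vadd s {..<n} \<notin> C"
    using s vadd_mem[OF _ all_ones_mem] vadd_vadd_cancel by (metis DiffD2 shadow_def)
  ultimately show ?thesis by (simp add: shadow_def)
qed

theorem shadow_identity:
  fixes y :: "'a::comm_ring_1"
  shows "(\<Sum>u\<in>C. (-1)^(wt u div 2) * ((1-y)^wt u * (1+y)^(n - wt u))) =
    of_nat (card C) * (\<Sum>s\<in>S. y^wt s)"
proof -
  define T where "T u = (1-y)^wt u * (1+y)^(n - wt u)" for u
  have sum_C: "(\<Sum>u\<in>C. f u) = (\<Sum>u\<in>C0. f u) + (\<Sum>u\<in>C - C0. f u)" for f :: "nat set \<Rightarrow> 'a"
    using finite_code doubly_even_subcode_subset by (metis sum.subset_diff add.commute)
  have half_even: "even (w div 2)" if "w mod 4 = 0" for w :: nat using that by presburger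
  have half_odd: "odd (w div 2)" if "w mod 4 = 2" for w :: nat using that by presburger
  have doubly_even_part: "(\<Sum>u\<in>C0. (-1)^(wt u div 2) * T u) = (\<Sum>u\<in>C0. T u)"
    by (rule sum.cong) (auto simp: doubly_even_subcode_def half_even)
  have singly_even_part: "(\<Sum>u\<in>C - C0. (-1)^(wt u div 2) * T u) = - (\<Sum>u\<in>C - C0. T u)"
    unfolding sum_negf[symmetric]
  proof (rule sum.cong)
    fix u assume "u \<in> C - C0"
    then have "odd (wt u div 2)" using half_odd mem_diff_doubly_even_subcode_iff by blast
    then show "(-1)^(wt u div 2) * T u = - T u" by simp
  qed simp
  have macwilliams_C0: "(\<Sum>u\<in>C0. T u) = of_nat (card C0) * ((\<Sum>v\<in>C. y^wt v) + (\<Sum>s\<in>S. y^wt s))"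
    unfolding T_def macwilliams_identity[OF doubly_even_subcode_is_code] dual_doubly_even_subcode
    using finite_code finite_shadow by (simp add: sum.union_disjoint shadow_disjoint)
  have macwilliams_C: "(\<Sum>u\<in>C. T u) = of_nat (card C) * (\<Sum>v\<in>C. y^wt v)"
    unfolding T_def using macwilliams_identity[OF code, of y] by (simp add: dual_eq)
  have "(\<Sum>u\<in>C. (-1)^(wt u div 2) * T u) = 2 * (\<Sum>u\<in>C0. T u) - (\<Sum>u\<in>C. T u)"
    unfolding sum_C[of "\<lambda>u. (-1)^(wt u div 2) * T u"] sum_C[of T] doubly_even_part singly_even_part
    by simp
  also have "\<dots> = of_nat (card C) * (\<Sum>s\<in>S. y^wt s)"
    unfolding macwilliams_C0 macwilliams_C card_eq_twice_doubly_even_subcode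
    by (simp add: algebra_simps)
  finally show ?thesis unfolding T_def .
qed

lemma shadow_nonempty: "S \<noteq> {}"
proof
  assume "S = {}"
  \<comment> \<open>at y = 1 only the zero word survives on the left, so |C| |S| = 2^n\<close>
  have "(\<Sum>u\<in>C. (-1)^(wt u div 2) * ((1-1)^wt u * (1+1)^(n - wt u))) =
      (\<Sum>u\<in>C. if u = {} then (2::int)^n else 0)"
  proof (rule sum.cong)
    fix u assume "u \<in> C"
    then show "(-1)^(wt u div 2) * ((1-1)^wt u * (1+1)^(n - wt u)) = (if u = {} then (2::int)^n else 0)"
      using finite_if_mem[of u] by (auto simp: wt_def)
  qed simp
  also have "\<dots> = 2^n" using empty_mem finite_code by simp
  finally show False using shadow_identity[of "1::int"] \<open>S = {}\<close> by simp
qed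

lemma min_wt_le_wt_add_shadow:
  assumes "s \<in> S" "s' \<in> S" "s \<noteq> s'"
  shows "min_wt C \<le> wt s + wt s'"
proof -
  have "min_wt C \<le> wt (vadd s s')"
    using assms vadd_shadow_mem vadd_eq_empty_iff min_wt_le by blast
  also have "\<dots> \<le> wt s + wt s'"
  proof -
    have "finite s" "finite s'" using assms(1,2) shadow_subset_words finite_if_mem_words by auto
    then show ?thesis using card_vadd[of s s'] unfolding wt_def by linarith
  qed
  finally show ?thesis .
qed

lemma weight_enum_shadow_below_min_wt:
  assumes "minimal_shadow n C" "j + 2 < min_wt C"
  shows "weight_enum S j = (if j = 2 then 1 else 0)"
proof -
  have "Min (wt ` S) \<in> wt ` S" using finite_shadow shadow_nonempty by simp
  then obtain s0 where s0: "s0 \<in> S" "wt s0 = 2"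
    using assms(1) by (auto simp: minimal_shadow_def)
  have unique: "s = s0" if "s \<in> S" "wt s = j" for s
  proof (rule ccontr)
    assume "s \<noteq> s0"
    with min_wt_le_wt_add_shadow[OF that(1) s0(1)] have "min_wt C \<le> j + 2"
      using that(2) s0(2) by simp
    then show False using assms(2) by simp
  qed
  have "{s \<in> S. wt s = j} = (if j = 2 then {s0} else {})"
  proof (cases "j = 2")
    case True
    show ?thesis unfolding if_P[OF True] using True s0 unique by blast
  next
    case False
    show ?thesis unfolding if_not_P[OF False] using False s0 unique by blast
  qed
  then show ?thesis by (simp add: weight_enum_def)
qed

lemma weight_enum_shadow_symmetric: "j \<le> n \<Longrightarrow> weight_enum S (n - j) = weight_enum S j"
  using shadow_subset_words vadd_all_ones_shadow_mem by (intro weight_enum_complement) auto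

lemma weight_enum_shadow_transform:
  fixes y :: "'a::comm_ring_1"
  shows "(\<Sum>i\<le>n. (-1)^(i div 2) * of_nat (weight_enum C i) * ((1-y)^i * (1+y)^(n-i))) =
    of_nat (card C) * (\<Sum>j\<le>n. of_nat (weight_enum S j) * y^j)"
proof -
  have "(\<Sum>i\<le>n. (-1)^(i div 2) * of_nat (weight_enum C i) * ((1-y)^i * (1+y)^(n-i))) =
      (\<Sum>i\<le>n. of_nat (weight_enum C i) * ((-1)^(i div 2) * ((1-y)^i * (1+y)^(n-i))))"
    by (rule sum.cong) (simp_all add: mult.left_commute)
  also have "\<dots> = (\<Sum>u\<in>C. (-1)^(wt u div 2) * ((1-y)^wt u * (1+y)^(n - wt u)))"
    by (rule sum_by_weight_enum[OF finite_code code_subset_words, symmetric])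
  also have "\<dots> = of_nat (card C) * (\<Sum>s\<in>S. y^wt s)"
    by (rule shadow_identity)
  also have "\<dots> = of_nat (card C) * (\<Sum>j\<le>n. of_nat (weight_enum S j) * y^j)"
    by (simp add: sum_by_weight_enum[OF finite_shadow shadow_subset_words])
  finally show ?thesis .
qed

end

section \<open>Extremal singly even codes of length 24m+4 with minimal shadow\<close>

locale extremal_code =
  fixes m :: nat and C :: "nat set set"
  assumes singly_even: "singly_even (24*m+4) C"
    and parameters: "is_nkd_code (24*m+4) (12*m+2) (4*m+2) C"
    and minimal_shadow: "minimal_shadow (24*m+4) C"
begin

sublocale singly_even_code "24*m+4" C
  using singly_even by unfold_locales

lemma min_wt_eq: "min_wt C = 4*m+2"
  using parameters by (simp add: is_nkd_code_def)

lemma card_eq: "card C = 2^(12*m+2)"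
  using parameters by (simp add: is_nkd_code_def)

lemma weight_enum_outside:
  assumes "i < 4*m+2 \<or> 20*m+2 < i"
  shows "weight_enum C i = (if i = 0 \<or> i = 24*m+4 then 1 else 0)"
proof -
  have below: "weight_enum C j = (if j = 0 then 1 else 0)" if "j < 4*m+2" for j
    using that by (cases "j = 0") (simp_all add: weight_enum_0 weight_enum_eq_0_below_min_wt min_wt_eq)
  consider (low) "i < 4*m+2" | (high) "20*m+2 < i" "i \<le> 24*m+4" | (beyond) "24*m+4 < i"
    using assms by linarith
  then show ?thesis
  proof cases
    case low
    then show ?thesis using below[of i] by simp
  next
    case high
    then have "weight_enum C i = weight_enum C (24*m+4 - i)" using weight_enum_symmetric[of i] by simp
    also have "\<dots> = (if 24*m+4 - i = 0 then 1 else 0)" using high by (intro below) linarith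
    finally show ?thesis using high by simp
  next
    case beyond
    then show ?thesis using weight_enum_eq_0_if_gt[OF code_subset_words] by simp
  qed
qed

lemma weight_enum_shadow_outside:
  assumes "j < 4*m \<or> 20*m+4 < j"
  shows "weight_enum S j = (if j = 2 \<or> j = 24*m+2 then 1 else 0)"
proof -
  have below: "weight_enum S l = (if l = 2 then 1 else 0)" if "l < 4*m" for l
    using that weight_enum_shadow_below_min_wt[OF minimal_shadow] by (simp add: min_wt_eq)
  consider (low) "j < 4*m" | (high) "20*m+4 < j" "j \<le> 24*m+4" | (beyond) "24*m+4 < j"
    using assms by linarith
  then show ?thesis
  proof cases
    case low
    then show ?thesis using below[of j] by simp
  next
    case high
    then have "weight_enum S j = weight_enum S (24*m+4 - j)" using weight_enum_shadow_symmetric[of j] by simp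
    also have "\<dots> = (if 24*m+4 - j = 2 then 1 else 0)" using high by (intro below) linarith
    finally show ?thesis using high by auto
  next
    case beyond
    then show ?thesis using weight_enum_eq_0_if_gt[OF shadow_subset_words] by simp
  qed
qed

end

section \<open>Uniqueness of the weight distribution\<close>

definition enum_poly :: "nat \<Rightarrow> (nat \<Rightarrow> 'a::comm_ring_1) \<Rightarrow> 'a poly" where
  "enum_poly n a = (\<Sum>i\<le>n. monom (a i) i)"

definition macwilliams_transform :: "nat \<Rightarrow> (nat \<Rightarrow> 'a::comm_ring_1) \<Rightarrow> 'a poly" where
  "macwilliams_transform n a = (\<Sum>i\<le>n. smult (a i) ([:1,-1:]^i * [:1,1:]^(n-i)))"

lemma coeff_enum_poly: "coeff (enum_poly n a) j = (if j \<le> n then a j else 0)"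
  by (simp add: enum_poly_def coeff_sum coeff_monom)

lemma poly_enum_poly: "poly (enum_poly n a) x = (\<Sum>i\<le>n. a i * x^i)"
  by (simp add: enum_poly_def poly_sum poly_monom)

lemma enum_poly_coeff: "degree p \<le> n \<Longrightarrow> enum_poly n (coeff p) = p"
  by (rule poly_eqI) (auto simp: coeff_enum_poly coeff_eq_0)

lemma poly_macwilliams_transform:
  "poly (macwilliams_transform n a) x = (\<Sum>i\<le>n. a i * ((1-x)^i * (1+x)^(n-i)))"
proof -
  have "poly [:1,-1:] x = 1 - x" "poly [:1,1:] x = 1 + x" by (simp_all add: algebra_simps)
  then show ?thesis by (simp add: macwilliams_transform_def poly_sum)
qed

lemma poly_eq_if_eq_except:
  fixes p q :: "'a::{idom,ring_char_0} poly"
  assumes "\<And>t. t \<noteq> a \<Longrightarrow> poly p t = poly q t"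
  shows "p = q"
proof (rule ccontr)
  assume "p \<noteq> q"
  then have "finite {t. poly (p - q) t = 0}" by (intro poly_roots_finite) simp
  moreover have "UNIV - {a} \<subseteq> {t. poly (p - q) t = 0}" using assms by auto
  ultimately have "finite (UNIV - {a} :: 'a set)" by (rule finite_subset[rotated])
  then show False using infinite_UNIV_char_0[where 'a = 'a] by simp
qed

lemma power_linear_dvd_mult_cancel:
  fixes p q :: "'a::idom poly"
  assumes "[:-a,1:]^k dvd p * q" "poly p a \<noteq> 0"
  shows "[:-a,1:]^k dvd q"
proof (cases "q = 0")
  case False
  with assms(2) have pq: "p * q \<noteq> 0" by auto
  then have "k \<le> order a (p * q)" using assms(1) order_divides by blast
  also have "\<dots> = order a q" using pq assms(2) by (simp add: order_mult order_0I)
  finally show ?thesis using order_divides by blast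
qed simp

lemma power_dvd_macwilliams_transform_low:
  assumes "\<And>i. i < K \<Longrightarrow> a i = 0"
  shows "[:-1,1:]^K dvd macwilliams_transform n a"
  unfolding macwilliams_transform_def
proof (rule dvd_sum)
  fix i
  show "[:-1,1:]^K dvd smult (a i) ([:1,-1:]^i * [:1,1:]^(n-i))"
  proof (cases "K \<le> i")
    case True
    have "[:-1,1:]^K dvd ([:-1,1:]^i :: 'a poly)" using True by (rule le_imp_power_dvd)
    then have "[:-1,1:]^K dvd smult ((-1)^i) ([:-1,1:]^i :: 'a poly)" by (rule dvd_smult)
    also have "smult ((-1)^i) ([:-1,1:]^i) = ([:1,-1:]^i :: 'a poly)"
      by (simp flip: smult_power)
    finally show ?thesis by (intro dvd_smult dvd_mult2)
  qed (use assms in simp)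
qed

lemma power_dvd_macwilliams_transform_high:
  assumes "\<And>i. n < i + K \<Longrightarrow> a i = 0"
  shows "[:1,1:]^K dvd macwilliams_transform n a"
  unfolding macwilliams_transform_def
proof (rule dvd_sum)
  fix i
  show "[:1,1:]^K dvd smult (a i) ([:1,-1:]^i * [:1,1:]^(n-i))"
  proof (cases "i + K \<le> n")
    case True
    then have "[:1,1:]^K dvd ([:1,1:]^(n-i) :: 'a poly)" by (intro le_imp_power_dvd) simp
    then show ?thesis by (simp add: dvd_smult)
  qed (use assms in simp)
qed

text \<open>Coefficients vanishing below K give a zero of order K at 0; through the MacWilliams
  transform, those vanishing below K and above n - K give zeros of order K at 1 and -1.\<close>

lemma enum_poly_factorization:
  fixes a :: "nat \<Rightarrow> complex"
  assumes vanish: "\<And>i. i < K \<or> n - K < i \<Longrightarrow> a i = 0"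
    and invariant: "macwilliams_transform n a = smult c (enum_poly n a)" and "c \<noteq> 0"
  obtains R where "enum_poly n a = monom 1 K * [:-1,1:]^K * [:1,1:]^K * R"
proof -
  let ?p = "enum_poly n a"
  have high: "a i = 0" if "n < i + K" for i using vanish[of i] that by arith
  have "[:-1,1:]^K dvd smult c ?p" "[:-(-1),1:]^K dvd smult c ?p"
    unfolding invariant[symmetric] using vanish high
    by (auto intro!: power_dvd_macwilliams_transform_low power_dvd_macwilliams_transform_high)
  then have dvd_1: "[:-1,1:]^K dvd ?p" and dvd_minus_1: "[:-(-1),1:]^K dvd ?p"
    using \<open>c \<noteq> 0\<close> dvd_smult_cancel by blast+
  have "monom 1 K dvd ?p"
    unfolding monom_1_dvd_iff' using vanish by (simp add: coeff_enum_poly)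
  then obtain Q where Q: "?p = monom 1 K * Q" by (elim dvdE)
  have "[:-1,1:]^K dvd Q"
    using dvd_1 unfolding Q by (rule power_linear_dvd_mult_cancel) (simp add: poly_monom)
  then obtain Q' where Q': "Q = [:-1,1:]^K * Q'" by (elim dvdE)
  have "[:-(-1),1:]^K dvd Q'"
    using dvd_minus_1 unfolding Q Q' mult.assoc[symmetric]
    by (rule power_linear_dvd_mult_cancel) (simp add: poly_monom)
  then obtain R where "Q' = [:1,1:]^K * R" by (auto elim: dvdE)
  then show ?thesis using that Q Q' by (simp add: mult.assoc)
qed

definition cayley :: "complex \<Rightarrow> complex" where
  "cayley t = \<i> * (1 - t) / (1 + t)"

lemma one_plus_ne_0: "t \<noteq> -1 \<Longrightarrow> 1 + t \<noteq> (0::complex)"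
  by (metis add.commute add_eq_0_iff)

lemma poly_macwilliams_transform_twisted:
  assumes "t \<noteq> -1"
  shows "poly (macwilliams_transform n (\<lambda>i. \<i>^i * a i)) t = (1+t)^n * poly (enum_poly n a) (cayley t)"
proof -
  have t: "1 + t \<noteq> 0" using assms by (rule one_plus_ne_0)
  have term_eq: "\<i>^i * a i * ((1-t)^i * (1+t)^(n-i)) = (1+t)^n * (a i * cayley t ^ i)" if "i \<le> n" for i
  proof -
    have "(1+t)^n = (1+t)^i * (1+t)^(n-i)" using that by (simp flip: power_add)
    moreover have "(1+t)^i * cayley t ^ i = \<i>^i * (1-t)^i"
      using t by (simp add: cayley_def flip: power_mult_distrib)
    ultimately show ?thesis by (simp add: mult_ac)
  qed
  show ?thesis
    unfolding poly_macwilliams_transform poly_enum_poly sum_distrib_left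
    by (rule sum.cong) (simp_all add: term_eq)
qed

lemma cayley_cubic:
  assumes "t \<noteq> -1"
  shows "(1+t)^4 * (cayley t * (cayley t - 1) * (cayley t + 1)) = -2 * \<i> * (1 - t^4)"
proof -
  have t: "1 + t \<noteq> 0" using assms by (rule one_plus_ne_0)
  have a: "(1+t) * cayley t = \<i> * (1-t)" using t by (simp add: cayley_def)
  have b: "(1+t) * (cayley t - 1) = \<i> * (1-t) - (1+t)" using a by (simp add: algebra_simps)
  have c: "(1+t) * (cayley t + 1) = \<i> * (1-t) + (1+t)" using a by (simp add: algebra_simps)
  have d: "(\<i> * (1-t) - (1+t)) * (\<i> * (1-t) + (1+t)) = -2 * (1 + t^2)"
    by (simp add: algebra_simps power2_eq_square)
  have "(1+t)^4 * (cayley t * (cayley t - 1) * (cayley t + 1)) =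
      (1+t) * ((1+t) * cayley t) * ((1+t) * (cayley t - 1) * ((1+t) * (cayley t + 1)))"
    by (simp add: power4_eq_xxxx algebra_simps)
  also have "\<dots> = (1+t) * (\<i> * (1-t)) * (-2 * (1 + t^2))" unfolding a b c d ..
  also have "\<dots> = -2 * \<i> * (1 - t^4)" by (simp add: algebra_simps power2_eq_square power4_eq_xxxx)
  finally show ?thesis .
qed

lemma inj_on_cayley: "inj_on cayley {t. t \<noteq> -1}"
proof (rule inj_onI)
  fix s t assume "s \<in> {t. t \<noteq> -1}" "t \<in> {t. t \<noteq> -1}" "cayley s = cayley t"
  then have "(1-s) * (1+t) = (1-t) * (1+s)"
    using one_plus_ne_0 by (simp add: cayley_def field_simps)
  then show "s = t" by (simp add: algebra_simps)
qed

lemma macwilliams_transform_twisted_ne_0: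
  fixes p :: "complex poly"
  assumes "p \<noteq> 0" "degree p \<le> r"
  shows "macwilliams_transform r (\<lambda>i. \<i>^i * coeff p i) \<noteq> 0"
proof
  assume "macwilliams_transform r (\<lambda>i. \<i>^i * coeff p i) = 0"
  then have "poly p (cayley t) = 0" if "t \<noteq> -1" for t
    using poly_macwilliams_transform_twisted[OF that, of r "coeff p"] one_plus_ne_0[OF that]
    by (simp add: enum_poly_coeff assms(2))
  then have "cayley ` {t. t \<noteq> -1} \<subseteq> {x. poly p x = 0}" by auto
  moreover have "infinite (cayley ` {t. t \<noteq> -1})"
  proof -
    have "infinite (UNIV - {-1 :: complex})" by (simp add: infinite_UNIV_char_0)
    then show ?thesis using inj_on_cayley by (simp add: finite_image_iff set_diff_eq)
  qed
  ultimately show False using poly_roots_finite[OF assms(1)] finite_subset by blast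
qed

lemma shadow_relation_factorization:
  fixes \<delta> \<sigma> :: "nat \<Rightarrow> complex" and R :: "complex poly"
  assumes even: "\<And>i. odd i \<Longrightarrow> \<delta> i = 0"
    and shadow: "\<And>y. (\<Sum>i\<le>4*K+r. (-1)^(i div 2) * \<delta> i * ((1-y)^i * (1+y)^(4*K+r-i))) =
      c * (\<Sum>j\<le>4*K+r. \<sigma> j * y^j)"
    and factorization: "enum_poly (4*K+r) \<delta> = monom 1 K * [:-1,1:]^K * [:1,1:]^K * R"
    and deg_R: "degree R \<le> r"
  shows "smult c (enum_poly (4*K+r) \<sigma>) =
    smult ((-2*\<i>)^K) ([:1,0,0,0,-1:]^K * macwilliams_transform r (\<lambda>i. \<i>^i * coeff R i))"
    (is "_ = smult _ (?Z^K * ?X)")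
proof (rule poly_eq_if_eq_except)
  fix t :: complex assume t: "t \<noteq> -1"
  have poly_\<Delta>: "poly (enum_poly (4*K+r) \<delta>) z = (z * (z - 1) * (z + 1))^K * poly R z" for z
  proof -
    have "poly [:-1,1:] z = z - 1" "poly [:1,1:] z = z + 1" by simp_all
    then show ?thesis
      unfolding factorization poly_mult poly_power poly_monom
      by (simp add: power_mult_distrib mult_ac add.commute[of 1 z])
  qed
  have twist: "(-1)^(i div 2) * \<delta> i = \<i>^i * \<delta> i" for i
    using even[of i] by (cases "even i") simp_all
  have "poly (smult c (enum_poly (4*K+r) \<sigma>)) t = poly (macwilliams_transform (4*K+r) (\<lambda>i. \<i>^i * \<delta> i)) t"
    using shadow[of t] by (simp add: poly_enum_poly poly_macwilliams_transform twist)
  also have "\<dots> = (1+t)^(4*K+r) * poly (enum_poly (4*K+r) \<delta>) (cayley t)"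
    by (rule poly_macwilliams_transform_twisted[OF t])
  also have "\<dots> = ((1+t)^4 * (cayley t * (cayley t - 1) * (cayley t + 1)))^K * ((1+t)^r * poly R (cayley t))"
  proof -
    have "(1+t)^(4*K+r) = ((1+t)^4)^K * (1+t)^r" by (simp add: power_add power_mult)
    then show ?thesis unfolding poly_\<Delta> by (simp add: power_mult_distrib mult_ac)
  qed
  also have "\<dots> = (-2 * \<i> * (1 - t^4))^K * poly ?X t"
    using poly_macwilliams_transform_twisted[OF t, of r "coeff R"]
    unfolding enum_poly_coeff[OF deg_R] cayley_cubic[OF t] by simp
  also have "\<dots> = poly (smult ((-2*\<i>)^K) (?Z^K * ?X)) t"
    by (simp add: algebra_simps power4_eq_xxxx flip: power_mult_distrib)
  finally show "poly (smult c (enum_poly (4*K+r) \<sigma>)) t = poly (smult ((-2*\<i>)^K) (?Z^K * ?X)) t" .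
qed

lemma degree_bound_quartic_power_multiple:
  fixes P X :: "complex poly"
  assumes eq: "smult c P = smult e ([:1,0,0,0,-1:]^K * X)" and "X \<noteq> 0" "c \<noteq> 0" "e \<noteq> 0"
    and "monom 1 k dvd P" "degree P \<le> d"
  shows "4*K + k \<le> d"
proof -
  define Z :: "complex poly" where "Z = [:1,0,0,0,-1:]"
  have ZX: "Z^K * X \<noteq> 0" using \<open>X \<noteq> 0\<close> by (simp add: Z_def)
  have "monom 1 k dvd smult e (Z^K * X)"
    unfolding Z_def eq[symmetric] using \<open>monom 1 k dvd P\<close> by (rule dvd_smult)
  then have "monom 1 k dvd Z^K * X" using \<open>e \<noteq> 0\<close> by (rule dvd_smult_cancel)
  then have "k \<le> order 0 (Z^K * X)" using monom_1_dvd_iff[OF ZX] by blast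
  also have "\<dots> = order 0 X" using ZX by (simp add: order_mult order_0I Z_def)
  also have "\<dots> \<le> degree X" using \<open>X \<noteq> 0\<close> by (rule order_degree)
  finally have "k \<le> degree X" .
  moreover have "4*K + degree X = degree P"
    using arg_cong[OF eq, of degree] \<open>X \<noteq> 0\<close> \<open>c \<noteq> 0\<close> \<open>e \<noteq> 0\<close>
    by (simp add: degree_mult_eq degree_power_eq)
  ultimately show ?thesis using \<open>degree P \<le> d\<close> by linarith
qed

theorem weight_distribution_difference_eq_0:
  fixes \<delta> \<sigma> :: "nat \<Rightarrow> complex" and c :: complex
  assumes size: "n < 4*K + 2*k"
    and even: "\<And>i. odd i \<Longrightarrow> \<delta> i = 0"
    and vanish: "\<And>i. i < K \<or> n - K < i \<Longrightarrow> \<delta> i = 0"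
    and shadow_vanish: "\<And>j. j < k \<or> n - k < j \<Longrightarrow> \<sigma> j = 0"
    and macwilliams: "\<And>y. (\<Sum>i\<le>n. \<delta> i * ((1-y)^i * (1+y)^(n-i))) = c * (\<Sum>i\<le>n. \<delta> i * y^i)"
    and shadow: "\<And>y. (\<Sum>i\<le>n. (-1)^(i div 2) * \<delta> i * ((1-y)^i * (1+y)^(n-i))) =
      c * (\<Sum>j\<le>n. \<sigma> j * y^j)"
    and "c \<noteq> 0"
  shows "\<delta> i = 0"
proof (rule ccontr)
  assume "\<delta> i \<noteq> 0"
  define \<Delta> where "\<Delta> = enum_poly n \<delta>"
  have "i \<le> n"
  proof (rule ccontr)
    assume "\<not> i \<le> n"
    then have "n - K < i" by arith
    then show False using vanish \<open>\<delta> i \<noteq> 0\<close> by blast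
  qed
  then have "\<Delta> \<noteq> 0"
    using \<open>\<delta> i \<noteq> 0\<close> coeff_enum_poly[of n \<delta> i] by (auto simp: \<Delta>_def)
  have "macwilliams_transform n \<delta> = smult c \<Delta>"
    using macwilliams
    by (simp add: \<Delta>_def poly_eq_poly_eq_iff[symmetric] fun_eq_iff poly_macwilliams_transform poly_enum_poly)
  then obtain R where \<Delta>_eq: "\<Delta> = monom 1 K * [:-1,1:]^K * [:1,1:]^K * R"
    using enum_poly_factorization vanish \<open>c \<noteq> 0\<close> unfolding \<Delta>_def by blast
  with \<open>\<Delta> \<noteq> 0\<close> have "R \<noteq> 0" by auto
  have "3*K + degree R = degree \<Delta>"
    using \<open>\<Delta> \<noteq> 0\<close> unfolding \<Delta>_eq by (simp add: degree_mult_eq degree_power_eq degree_monom_eq)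
  also have "\<dots> \<le> n - K"
    unfolding \<Delta>_def by (rule degree_le) (use vanish in \<open>auto simp: coeff_enum_poly\<close>)
  finally have "3*K + degree R \<le> n - K" .
  then have "n = 4*K + (n - 4*K)" "degree R \<le> n - 4*K" by arith+
  then obtain r where n_eq: "n = 4*K + r" and deg_R: "degree R \<le> r" by blast
  define X where "X = macwilliams_transform r (\<lambda>i. \<i>^i * coeff R i)"
  have "X \<noteq> 0" unfolding X_def using \<open>R \<noteq> 0\<close> deg_R by (rule macwilliams_transform_twisted_ne_0)
  have shadow_eq: "smult c (enum_poly n \<sigma>) = smult ((-2*\<i>)^K) ([:1,0,0,0,-1:]^K * X)"
    unfolding X_def n_eq
    by (rule shadow_relation_factorization[OF even shadow[unfolded n_eq] \<Delta>_eq[unfolded \<Delta>_def n_eq] deg_R])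
  have "monom 1 k dvd enum_poly n \<sigma>"
    unfolding monom_1_dvd_iff' using shadow_vanish by (simp add: coeff_enum_poly)
  moreover have "degree (enum_poly n \<sigma>) \<le> n - k"
    by (rule degree_le) (use shadow_vanish in \<open>auto simp: coeff_enum_poly\<close>)
  ultimately have "4*K + k \<le> n - k"
    using degree_bound_quartic_power_multiple[OF shadow_eq \<open>X \<noteq> 0\<close> \<open>c \<noteq> 0\<close>] by simp
  then show False using size by arith
qed

theorem mainTheorem2:
  fixes m :: nat and C D :: "nat set set"
  defines "n \<equiv> 24 * m + 4"
  assumes "singly_even n C" and "is_nkd_code n (12 * m + 2) (4 * m + 2) C"
    and "minimal_shadow n C"
    and "singly_even n D" and "is_nkd_code n (12 * m + 2) (4 * m + 2) D"
    and "minimal_shadow n D"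
  shows "weight_enum C = weight_enum D"
proof -
  interpret C: extremal_code m C using assms(2-4) unfolding n_def by unfold_locales
  interpret D: extremal_code m D using assms(5-7) unfolding n_def by unfold_locales
  define \<delta> :: "nat \<Rightarrow> complex"
    where "\<delta> i = of_nat (weight_enum C i) - of_nat (weight_enum D i)" for i
  define \<sigma> :: "nat \<Rightarrow> complex"
    where "\<sigma> j = of_nat (weight_enum (shadow n C) j) - of_nat (weight_enum (shadow n D) j)" for j
  have "\<delta> i = 0" for i
  proof (rule weight_distribution_difference_eq_0[where K = "4*m+2" and k = "4*m" and c = "2^(12*m+2)"])
    show "n < 4 * (4*m+2) + 2 * (4*m)" unfolding n_def by simp
    show "\<delta> i = 0" if "odd i" for i
      using that by (simp add: \<delta>_def C.weight_enum_eq_0_if_odd D.weight_enum_eq_0_if_odd)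
    show "\<delta> i = 0" if "i < 4*m+2 \<or> n - (4*m+2) < i" for i
    proof -
      have "i < 4*m+2 \<or> 20*m+2 < i" using that unfolding n_def by arith
      then show ?thesis by (simp add: \<delta>_def C.weight_enum_outside D.weight_enum_outside)
    qed
    show "\<sigma> j = 0" if "j < 4*m \<or> n - 4*m < j" for j
    proof -
      have "j < 4*m \<or> 20*m+4 < j" using that unfolding n_def by arith
      then show ?thesis
        by (simp add: \<sigma>_def n_def C.weight_enum_shadow_outside D.weight_enum_shadow_outside)
    qed
    show "(\<Sum>i\<le>n. \<delta> i * ((1-y)^i * (1+y)^(n-i))) = 2^(12*m+2) * (\<Sum>i\<le>n. \<delta> i * y^i)" for y
      using C.weight_enum_macwilliams[of y] D.weight_enum_macwilliams[of y]
      by (simp add: \<delta>_def n_def C.card_eq D.card_eq left_diff_distrib right_diff_distrib sum_subtractf)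
    show "(\<Sum>i\<le>n. (-1)^(i div 2) * \<delta> i * ((1-y)^i * (1+y)^(n-i))) =
        2^(12*m+2) * (\<Sum>j\<le>n. \<sigma> j * y^j)" for y
      using C.weight_enum_shadow_transform[of y] D.weight_enum_shadow_transform[of y]
      by (simp add: \<delta>_def \<sigma>_def n_def C.card_eq D.card_eq
          left_diff_distrib right_diff_distrib sum_subtractf)
  qed simp
  then show ?thesis by (simp add: \<delta>_def fun_eq_iff)
qed

end
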